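(* Let $(G_N)$ be a family of nonempty graphs. If $\sup_N |V(\operatorname{core}(G_N))|<\infty$, then the set $\{\hat r_\infty(G_N): N\ge 1\}$ is finite.
   Context: All graphs are finite and simple; a graph is nonempty if it has at least one edge. $\operatorname{core}(G)$ is the graph obtained from $G$ by deleting all isolated vertices. $tK_2$ is a matching with $t$ edges. For graphs $F,G,H$, $F\to(G,H)$ means every red--blue coloring of $E(F)$ contains a red copy of $G$ or a blue copy of $H$, and $\hat r(G,H)=\min\{|E(F)|:F\to(G,H)\}$. For a nonempty graph $G$, $\hat r_\infty(G)=\lim_{t\to\infty}\frac{\hat r(tK_2,G)}{t\,|E(G)|}$ (this limit exists). *)

theory Defs
  imports Complex_Main
begin

text \<open>A finite simple graph is represented by its (finite) edge set, each edge a
2-element set of vertices. Vertices are natural numbers. The vertex set of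
core(G) is the union of the edges.\<close>

definition simple_graph :: "nat set set \<Rightarrow> bool" where
  "simple_graph E \<longleftrightarrow> finite E \<and> (\<forall>e\<in>E. card e = 2)"

definition core_vertices :: "nat set set \<Rightarrow> nat set" where
  "core_vertices E = \<Union>E"

definition contains_copy :: "nat set set \<Rightarrow> nat set set \<Rightarrow> bool" where
  "contains_copy H G \<longleftrightarrow>
     (\<exists>f. inj_on f (core_vertices G) \<and> (\<forall>e\<in>G. f ` e \<in> H))"

text \<open>F \<rightarrow> (G,H): every red/blue colouring of E(F) (red edges R) has a red G or a blue H.\<close>
definition arrows :: "nat set set \<Rightarrow> nat set set \<Rightarrow> nat set set \<Rightarrow> bool" where
  "arrows F G H \<longleftrightarrow> (\<forall>R. R \<subseteq> F \<longrightarrow> contains_copy R G \<or> contains_copy (F - R) H)"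

definition size_ramsey :: "nat set set \<Rightarrow> nat set set \<Rightarrow> nat" where
  "size_ramsey G H = (LEAST m. \<exists>F. simple_graph F \<and> card F = m \<and> arrows F G H)"

definition matching :: "nat \<Rightarrow> nat set set" where
  "matching t = {{2*i, 2*i+1} | i. i < t}"

definition r_infty :: "nat set set \<Rightarrow> real" where
  "r_infty G = lim (\<lambda>t. real (size_ramsey (matching t) G) / (real t * real (card G)))"

end

theory Submission
  imports Defs
begin

text \<open>The limit \<open>r_infty G\<close> depends on \<open>G\<close> only through its isomorphism type, and
graphs whose cores have at most \<open>B\<close> vertices fall into finitely many isomorphism types:
each is isomorphic to a graph on the vertex set \<open>{0..<B}\<close>.\<close>

definition relabel :: "(nat \<Rightarrow> nat) \<Rightarrow> nat set set \<Rightarrow> nat set set" where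
  "relabel h G = (\<lambda>e. h ` e) ` G"

lemma core_vertices_relabel: "core_vertices (relabel h G) = h ` core_vertices G"
  unfolding relabel_def core_vertices_def by auto

lemma card_relabel:
  assumes "inj_on h (core_vertices G)"
  shows "card (relabel h G) = card G"
  unfolding relabel_def
proof (rule card_image)
  show "inj_on (\<lambda>e. h ` e) G"
    using assms unfolding core_vertices_def
    by (intro inj_onI) (meson Union_upper inj_on_image_eq_iff)
qed

lemma contains_copy_relabel_iff:
  assumes h: "inj_on h (core_vertices G)"
  shows "contains_copy H (relabel h G) \<longleftrightarrow> contains_copy H G"
proof
  assume "contains_copy H (relabel h G)"
  then obtain f where f: "inj_on f (h ` core_vertices G)" "\<forall>e\<in>G. f ` h ` e \<in> H"
    unfolding contains_copy_def core_vertices_relabel by (auto simp: relabel_def)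
  have "inj_on (f \<circ> h) (core_vertices G)"
    using f(1) h by (simp add: comp_inj_on)
  moreover have "\<forall>e\<in>G. (f \<circ> h) ` e \<in> H"
    using f(2) by (simp add: image_comp)
  ultimately show "contains_copy H G"
    unfolding contains_copy_def by blast
next
  assume "contains_copy H G"
  then obtain f where f: "inj_on f (core_vertices G)" "\<forall>e\<in>G. f ` e \<in> H"
    unfolding contains_copy_def by auto
  define g where "g = f \<circ> inv_into (core_vertices G) h"
  have "inj_on g (h ` core_vertices G)"
    unfolding g_def using f(1) h
    by (metis comp_inj_on inj_on_inv_into inv_into_image_cancel order_refl)
  moreover have "g ` h ` e = f ` e" if "e \<in> G" for e
    unfolding g_def image_comp[symmetric] using h that
    by (simp add: inv_into_image_cancel Union_upper core_vertices_def)
  ultimately show "contains_copy H (relabel h G)"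
    using f(2) unfolding contains_copy_def core_vertices_relabel
    by (auto simp: relabel_def)
qed

lemma size_ramsey_relabel:
  assumes h: "inj_on h (core_vertices G)"
  shows "size_ramsey M (relabel h G) = size_ramsey M G"
proof -
  have "arrows F M (relabel h G) = arrows F M G" for F
    unfolding arrows_def using contains_copy_relabel_iff[OF h] by simp
  then show ?thesis
    unfolding size_ramsey_def by simp
qed

lemma r_infty_relabel:
  assumes "inj_on h (core_vertices G)"
  shows "r_infty (relabel h G) = r_infty G"
  unfolding r_infty_def size_ramsey_relabel[OF assms] card_relabel[OF assms] ..

lemma finite_core_vertices: "simple_graph G \<Longrightarrow> finite (core_vertices G)"
  unfolding simple_graph_def core_vertices_def
  by (metis card.infinite finite_Union zero_neq_numeral)

lemma relabel_into_initial_segment: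
  assumes "finite (core_vertices G)"
  obtains h where "inj_on h (core_vertices G)"
    and "relabel h G \<in> Pow (Pow {0..<card (core_vertices G)})"
proof -
  obtain h where "bij_betw h (core_vertices G) {0..<card (core_vertices G)}"
    using ex_bij_betw_finite_nat[OF assms] by blast
  then show thesis
    by (intro that) (auto simp: bij_betw_def relabel_def core_vertices_def)
qed

lemma finite_r_infty_bounded_core:
  "finite (r_infty ` {G. simple_graph G \<and> card (core_vertices G) \<le> B})"
proof (rule finite_subset)
  show "r_infty ` {G. simple_graph G \<and> card (core_vertices G) \<le> B}
          \<subseteq> r_infty ` Pow (Pow {0..<B})"
  proof clarify
    fix G assume G: "simple_graph G" "card (core_vertices G) \<le> B"
    obtain h where h: "inj_on h (core_vertices G)"
      and "relabel h G \<in> Pow (Pow {0..<card (core_vertices G)})"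
      using relabel_into_initial_segment finite_core_vertices[OF G(1)] by blast
    moreover have "{0..<card (core_vertices G)} \<subseteq> {0..<B}"
      using G(2) by auto
    ultimately have "relabel h G \<in> Pow (Pow {0..<B})"
      by blast
    then show "r_infty G \<in> r_infty ` Pow (Pow {0..<B})"
      using r_infty_relabel[OF h] by (metis image_eqI)
  qed
qed simp

theorem proposition2p8:
  fixes G :: "nat \<Rightarrow> nat set set"
  assumes "\<And>N. N \<ge> 1 \<Longrightarrow> simple_graph (G N) \<and> G N \<noteq> {}"
    and "\<exists>B. \<forall>N\<ge>1. card (core_vertices (G N)) \<le> B"
  shows "finite {r_infty (G N) | N. N \<ge> 1}"
proof -
  obtain B where B: "\<forall>N\<ge>1. card (core_vertices (G N)) \<le> B"
    using assms(2) by blast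
  have "{r_infty (G N) | N. N \<ge> 1}
          \<subseteq> r_infty ` {G. simple_graph G \<and> card (core_vertices G) \<le> B}"
    using assms(1) B by blast
  then show ?thesis
    using finite_r_infty_bounded_core finite_subset by blast
qed

end
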